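(* Let $n\ge 2$, let $K$ be a field, and let $I(2,n)\subset K[x_{ij}:1\le i,j\le n]$ be the ideal generated by the $2$-minors of the generic $n\times n$ matrix $X=(x_{ij})$. Let $\succ$ be a reverse lexicographic term order induced by a total order of the variables in which $x_{11}\prec x_{22}\prec\cdots\prec x_{nn}$, every diagonal variable $x_{ii}$ is smaller than every off-diagonal variable $x_{ab}$ ($a\ne b$), and the off-diagonal variables are ordered so that $x_{ij}\succ x_{hk}$ whenever $|i-j|<|h-k|$. Let $H(2,n)$ be the monomial ideal generated by the following monomials, for all $i<h$ and $j<k$: (1) $x_{ik}x_{hj}$ whenever $i=j$ or $h=k$; (2) $x_{ij}x_{hk}$ whenever $i\neq j$ and $h\neq k$. Then $\operatorname{in}_\succ(I(2,n))=H(2,n)$.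
   Context: $\operatorname{in}_\succ(I)$ denotes the initial ideal of $I$ with respect to the term order $\succ$. *)

theory Defs
  imports "HOL-Library.Poly_Mapping"
begin

text \<open>Monomials are finitely supported exponent vectors, polynomials are finitely
  supported coefficient functions on monomials (convolution product).\<close>

type_synonym var = "nat \<times> nat"
type_synonym mon = "var \<Rightarrow>\<^sub>0 nat"
type_synonym 'a mpoly = "mon \<Rightarrow>\<^sub>0 'a"

definition matvars :: "nat \<Rightarrow> var set" where
  "matvars n = {1..n} \<times> {1..n}"

definition polyring :: "nat \<Rightarrow> ('a::field) mpoly set" where
  "polyring n = {p :: 'a mpoly. \<forall>m \<in> Poly_Mapping.keys p. Poly_Mapping.keys m \<subseteq> matvars n}"

definition monomial_poly :: "mon \<Rightarrow> ('a::field) mpoly" where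
  "monomial_poly m = Poly_Mapping.single m 1"

definition X :: "nat \<Rightarrow> nat \<Rightarrow> ('a::field) mpoly" where
  "X i j = monomial_poly (Poly_Mapping.single (i, j) 1)"

inductive_set ideal_gen :: "nat \<Rightarrow> ('a::field) mpoly set \<Rightarrow> 'a mpoly set"
  for n :: nat and G :: "'a mpoly set" where
  zero: "0 \<in> ideal_gen n G"
| gen: "g \<in> G \<Longrightarrow> g \<in> ideal_gen n G"
| add: "a \<in> ideal_gen n G \<Longrightarrow> b \<in> ideal_gen n G \<Longrightarrow> a + b \<in> ideal_gen n G"
| mult: "q \<in> polyring n \<Longrightarrow> a \<in> ideal_gen n G \<Longrightarrow> q * a \<in> ideal_gen n G"

definition minors2 :: "nat \<Rightarrow> ('a::field) mpoly set" where
  "minors2 n = {X i j * X h k - X i k * X h j | i j h k.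
      1 \<le> i \<and> i < h \<and> h \<le> n \<and> 1 \<le> j \<and> j < k \<and> k \<le> n}"

definition I2 :: "nat \<Rightarrow> ('a::field) mpoly set" where
  "I2 n = ideal_gen n (minors2 n)"

definition H2_gens :: "nat \<Rightarrow> ('a::field) mpoly set" where
  "H2_gens n =
     {X i k * X h j | i j h k.
        1 \<le> i \<and> i < h \<and> h \<le> n \<and> 1 \<le> j \<and> j < k \<and> k \<le> n \<and> (i = j \<or> h = k)}
   \<union> {X i j * X h k | i j h k.
        1 \<le> i \<and> i < h \<and> h \<le> n \<and> 1 \<le> j \<and> j < k \<and> k \<le> n \<and> i \<noteq> j \<and> h \<noteq> k}"

definition H2 :: "nat \<Rightarrow> ('a::field) mpoly set" where
  "H2 n = ideal_gen n (H2_gens n)"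

text \<open>A strict total order R on the variable set V (R x y means x is smaller than y).\<close>
definition strict_total_on :: "var set \<Rightarrow> (var \<Rightarrow> var \<Rightarrow> bool) \<Rightarrow> bool" where
  "strict_total_on V R \<longleftrightarrow>
     (\<forall>x\<in>V. \<not> R x x) \<and>
     (\<forall>x\<in>V. \<forall>y\<in>V. \<forall>z\<in>V. R x y \<longrightarrow> R y z \<longrightarrow> R x z) \<and>
     (\<forall>x\<in>V. \<forall>y\<in>V. x \<noteq> y \<longrightarrow> R x y \<or> R y x)"

definition mdeg :: "mon \<Rightarrow> nat" where
  "mdeg m = (\<Sum>x\<in>Poly_Mapping.keys m. Poly_Mapping.lookup m x)"

text \<open>The (degree) reverse lexicographic term order induced by the variable
  order R on V: u is smaller than v iff deg u < deg v, or the degrees agree and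
  at the R-smallest variable where the exponents differ, u has the larger exponent.\<close>
definition revlex_less :: "var set \<Rightarrow> (var \<Rightarrow> var \<Rightarrow> bool) \<Rightarrow> mon \<Rightarrow> mon \<Rightarrow> bool" where
  "revlex_less V R u v \<longleftrightarrow>
     mdeg u < mdeg v \<or>
     (mdeg u = mdeg v \<and>
      (\<exists>x\<in>V. Poly_Mapping.lookup u x \<noteq> Poly_Mapping.lookup v x \<and>
             (\<forall>y\<in>V. R y x \<longrightarrow> Poly_Mapping.lookup u y = Poly_Mapping.lookup v y) \<and>
             Poly_Mapping.lookup v x < Poly_Mapping.lookup u x))"

definition lead_mon :: "var set \<Rightarrow> (var \<Rightarrow> var \<Rightarrow> bool) \<Rightarrow> ('a::field) mpoly \<Rightarrow> mon" where
  "lead_mon V R p = (THE m. m \<in> Poly_Mapping.keys p \<and> (\<forall>m'\<in>Poly_Mapping.keys p. m' \<noteq> m \<longrightarrow> revlex_less V R m' m))"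

definition initial_ideal :: "nat \<Rightarrow> (var \<Rightarrow> var \<Rightarrow> bool) \<Rightarrow> ('a::field) mpoly set \<Rightarrow> 'a mpoly set" where
  "initial_ideal n R I =
     ideal_gen n {monomial_poly (lead_mon (matvars n) R f) | f. f \<in> I \<and> f \<noteq> 0}"

end

theory Submission
  imports Defs "HOL-Library.Function_Algebras" "HOL-Library.Product_Plus"
begin

(* Grade the monomials by their row and column sums, the bidegree. The 2-minors are differences
   of two monomials of equal bidegree, so on every bidegree fibre the coefficients of any f in
   I(2,n) sum to zero. Call a monomial standard if no generator of H(2,n) divides it. A standard
   monomial is determined by its bidegree: it contains a diagonal variable x_tt, or else the
   variable in its first nonzero row and last nonzero column, and that variable can be peeled off.
   Every generator of H(2,n) is the leading term of a 2-minor whose other term has the same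
   bidegree, so the revlex-least monomial of a fibre is standard, hence it is the standard one.
   Consequently a standard leading monomial of f in I(2,n) would be the only monomial of f in its
   fibre, which is impossible; so in(I(2,n)) lies in H(2,n), and the generators of H(2,n) are
   themselves leading monomials of 2-minors. *)

section \<open>The reverse lexicographic order\<close>

lemma finite_matvars: "finite (matvars n)"
  by (simp add: matvars_def)

lemma mdeg_add: "mdeg (a + b) = mdeg a + mdeg b"
  unfolding mdeg_def by (rule setsum_keys_plus_distrib) auto

lemma mdeg_single: "mdeg (Poly_Mapping.single x k) = k"
  by (simp add: mdeg_def)

context
  fixes V :: "var set" and R :: "var \<Rightarrow> var \<Rightarrow> bool"
  assumes order: "strict_total_on V R"
begin

lemma var_order_irrefl: "x \<in> V \<Longrightarrow> \<not> R x x"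
  using order unfolding strict_total_on_def by blast

lemma var_order_trans: "x \<in> V \<Longrightarrow> y \<in> V \<Longrightarrow> z \<in> V \<Longrightarrow> R x y \<Longrightarrow> R y z \<Longrightarrow> R x z"
  using order unfolding strict_total_on_def by blast

lemma var_order_total: "x \<in> V \<Longrightarrow> y \<in> V \<Longrightarrow> x \<noteq> y \<Longrightarrow> R x y \<or> R y x"
  using order unfolding strict_total_on_def by blast

lemma revlex_lessI:
  assumes "mdeg u = mdeg v" "x \<in> V" "Poly_Mapping.lookup v x < Poly_Mapping.lookup u x"
    and "\<And>y. y \<in> V \<Longrightarrow> R y x \<Longrightarrow> Poly_Mapping.lookup u y = Poly_Mapping.lookup v y"
  shows "revlex_less V R u v"
  unfolding revlex_less_def using assms by (intro disjI2 conjI bexI[of _ x]) auto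

lemma revlex_less_irrefl: "\<not> revlex_less V R u u"
  unfolding revlex_less_def by auto

lemma revlex_less_trans:
  assumes uv: "revlex_less V R u v" and vw: "revlex_less V R v w"
  shows "revlex_less V R u w"
proof (cases "mdeg u < mdeg v \<or> mdeg v < mdeg w")
  case True
  then show ?thesis using uv vw unfolding revlex_less_def by auto
next
  case False
  then have deg: "mdeg u = mdeg w" using uv vw unfolding revlex_less_def by auto
  from False uv obtain x where x: "x \<in> V" "Poly_Mapping.lookup v x < Poly_Mapping.lookup u x"
    "\<forall>y\<in>V. R y x \<longrightarrow> Poly_Mapping.lookup u y = Poly_Mapping.lookup v y"
    unfolding revlex_less_def by auto
  from False vw obtain z where z: "z \<in> V" "Poly_Mapping.lookup w z < Poly_Mapping.lookup v z"
    "\<forall>y\<in>V. R y z \<longrightarrow> Poly_Mapping.lookup v y = Poly_Mapping.lookup w y"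
    unfolding revlex_less_def by auto
  \<comment> \<open>the comparison of u and w is decided at the R-smaller of x and z\<close>
  consider "x = z" | "R x z" | "R z x" using var_order_total[OF x(1) z(1)] by blast
  then show ?thesis
  proof cases
    case 1
    then show ?thesis using x z by (intro revlex_lessI[OF deg x(1)]) auto
  next
    case 2
    then show ?thesis using x z var_order_trans[OF _ x(1) z(1)]
      by (intro revlex_lessI[OF deg x(1)]) auto
  next
    case 3
    then show ?thesis using x z var_order_trans[OF _ z(1) x(1)]
      by (intro revlex_lessI[OF deg z(1)]) auto
  qed
qed

lemma revlex_less_asym: "revlex_less V R u v \<Longrightarrow> \<not> revlex_less V R v u"
  using revlex_less_trans revlex_less_irrefl by blast

lemma revlex_less_add_left:
  "revlex_less V R a b \<Longrightarrow> revlex_less V R (w + a) (w + b)"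
  unfolding revlex_less_def mdeg_add lookup_add by simp

lemma asymp_on_revlex_less: "asymp_on A (revlex_less V R)"
  by (rule asymp_onI) (rule revlex_less_asym)

lemma transp_on_revlex_less: "transp_on A (revlex_less V R)"
  by (rule transp_onI) (rule revlex_less_trans)

lemma ex_min_differing_var:
  fixes u v :: mon
  assumes "finite V" "q \<in> V" "Poly_Mapping.lookup u q \<noteq> Poly_Mapping.lookup v q"
  shows "\<exists>x\<in>V. (x = q \<or> R x q) \<and> Poly_Mapping.lookup u x \<noteq> Poly_Mapping.lookup v x \<and>
    (\<forall>y\<in>V. R y x \<longrightarrow> Poly_Mapping.lookup u y = Poly_Mapping.lookup v y)"
proof -
  let ?D = "{x\<in>V. (x = q \<or> R x q) \<and> Poly_Mapping.lookup u x \<noteq> Poly_Mapping.lookup v x}"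
  have "asymp_on ?D R"
    by (rule asymp_onI) (use var_order_irrefl var_order_trans in blast)
  moreover have "transp_on ?D R"
    by (rule transp_onI) (use var_order_trans in blast)
  moreover have "q \<in> ?D" using assms(2,3) by simp
  then have "?D \<noteq> {}" by blast
  moreover have "finite ?D" using assms(1) by simp
  ultimately obtain x where x: "x \<in> ?D" "\<forall>y\<in>?D. y \<noteq> x \<longrightarrow> \<not> R y x"
    using Finite_Set.bex_min_element by blast
  have "Poly_Mapping.lookup u y = Poly_Mapping.lookup v y" if "y \<in> V" "R y x" for y
  proof -
    have "R y q" using x(1) that var_order_trans[OF that(1), of x q] assms(2) by auto
    show ?thesis
    proof (rule ccontr)
      assume "Poly_Mapping.lookup u y \<noteq> Poly_Mapping.lookup v y"
      then have "y \<in> ?D" using that(1) \<open>R y q\<close> by simp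
      moreover have "y \<noteq> x" using that var_order_irrefl by blast
      ultimately show False using x(2) that(2) by blast
    qed
  qed
  then show ?thesis using x(1) by blast
qed

lemma revlex_less_total:
  assumes "finite V" "Poly_Mapping.keys u \<subseteq> V" "Poly_Mapping.keys v \<subseteq> V" "u \<noteq> v"
  shows "revlex_less V R u v \<or> revlex_less V R v u"
proof (cases "mdeg u = mdeg v")
  case True
  obtain q where q: "Poly_Mapping.lookup u q \<noteq> Poly_Mapping.lookup v q"
    using \<open>u \<noteq> v\<close> poly_mapping_eqI by metis
  then have "q \<in> Poly_Mapping.keys u \<union> Poly_Mapping.keys v" by (simp add: in_keys_iff) linarith
  then have "q \<in> V" using assms(2,3) by blast
  then obtain x where x: "x \<in> V" "x = q \<or> R x q" "Poly_Mapping.lookup u x \<noteq> Poly_Mapping.lookup v x"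
    "\<forall>y\<in>V. R y x \<longrightarrow> Poly_Mapping.lookup u y = Poly_Mapping.lookup v y"
    using ex_min_differing_var[OF assms(1) _ q] by blast
  consider "Poly_Mapping.lookup v x < Poly_Mapping.lookup u x"
    | "Poly_Mapping.lookup u x < Poly_Mapping.lookup v x"
    using x(3) by linarith
  then show ?thesis
  proof cases
    case 1
    then show ?thesis using revlex_lessI[OF True x(1)] x(4) by blast
  next
    case 2
    then show ?thesis using revlex_lessI[OF True[symmetric] x(1)] x(4) by fastforce
  qed
next
  case False
  then have "mdeg u < mdeg v \<or> mdeg v < mdeg u" by linarith
  then show ?thesis unfolding revlex_less_def by blast
qed

lemma revlex_less_if_var_below:
  assumes "finite V" "mdeg u = mdeg v" "q \<in> V" "q \<in> Poly_Mapping.keys u"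
    and "Poly_Mapping.keys v \<subseteq> V" "\<And>p. p \<in> Poly_Mapping.keys v \<Longrightarrow> R q p"
  shows "revlex_less V R u v"
proof -
  have "q \<notin> Poly_Mapping.keys v" using assms(3,6) var_order_irrefl by blast
  then have "Poly_Mapping.lookup u q \<noteq> Poly_Mapping.lookup v q"
    using assms(4) by (simp add: in_keys_iff)
  then obtain x where x: "x \<in> V" "x = q \<or> R x q" "Poly_Mapping.lookup u x \<noteq> Poly_Mapping.lookup v x"
    "\<forall>y\<in>V. R y x \<longrightarrow> Poly_Mapping.lookup u y = Poly_Mapping.lookup v y"
    using ex_min_differing_var[OF assms(1,3)] by blast
  have "x \<notin> Poly_Mapping.keys v"
    using x(1,2) assms(3,5,6) var_order_irrefl var_order_trans by blast
  then show ?thesis using x by (intro revlex_lessI[OF assms(2) x(1)]) (auto simp: in_keys_iff)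
qed

lemma lead_mon_eqI:
  assumes m: "m \<in> Poly_Mapping.keys p"
    and greatest: "\<And>m'. m' \<in> Poly_Mapping.keys p \<Longrightarrow> m' \<noteq> m \<Longrightarrow> revlex_less V R m' m"
  shows "lead_mon V R p = m"
  unfolding lead_mon_def
proof (rule the_equality)
  show "m \<in> Poly_Mapping.keys p \<and> (\<forall>m'\<in>Poly_Mapping.keys p. m' \<noteq> m \<longrightarrow> revlex_less V R m' m)"
    using m greatest by blast
next
  fix m'
  assume m': "m' \<in> Poly_Mapping.keys p \<and> (\<forall>m''\<in>Poly_Mapping.keys p. m'' \<noteq> m' \<longrightarrow> revlex_less V R m'' m')"
  show "m' = m"
  proof (rule ccontr)
    assume "m' \<noteq> m"
    then have "revlex_less V R m' m" "revlex_less V R m m'" using m m' greatest by auto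
    then show False using revlex_less_asym by blast
  qed
qed

lemma lead_mon_greatest:
  assumes "finite V" "p \<noteq> 0" "\<And>m. m \<in> Poly_Mapping.keys p \<Longrightarrow> Poly_Mapping.keys m \<subseteq> V"
  shows "lead_mon V R p \<in> Poly_Mapping.keys p"
    and "\<And>m. m \<in> Poly_Mapping.keys p \<Longrightarrow> m \<noteq> lead_mon V R p \<Longrightarrow> revlex_less V R m (lead_mon V R p)"
proof -
  obtain m where m: "m \<in> Poly_Mapping.keys p" "\<forall>m'\<in>Poly_Mapping.keys p. m' \<noteq> m \<longrightarrow> \<not> revlex_less V R m m'"
    using Finite_Set.bex_max_element[OF finite_keys asymp_on_revlex_less transp_on_revlex_less] assms(2)
    by (metis keys_eq_empty)
  have greatest: "revlex_less V R m' m" if "m' \<in> Poly_Mapping.keys p" "m' \<noteq> m" for m'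
    using revlex_less_total[OF assms(1) assms(3)[OF that(1)] assms(3)[OF m(1)] that(2)] m(2) that
    by blast
  then have "lead_mon V R p = m" by (rule lead_mon_eqI[OF m(1)])
  then show "lead_mon V R p \<in> Poly_Mapping.keys p"
    and "\<And>m'. m' \<in> Poly_Mapping.keys p \<Longrightarrow> m' \<noteq> lead_mon V R p \<Longrightarrow> revlex_less V R m' (lead_mon V R p)"
    using m(1) greatest by simp_all
qed

end

section \<open>Ideals and coefficient sums over the fibres of a grading\<close>

lemma keys_add_nat: "Poly_Mapping.keys (a + b :: 'k \<Rightarrow>\<^sub>0 nat) = Poly_Mapping.keys a \<union> Poly_Mapping.keys b"
  by (auto simp: in_keys_iff lookup_add)

lemma polyring_zero: "0 \<in> polyring n"
  by (simp add: polyring_def)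

lemma polyring_add: "p \<in> polyring n \<Longrightarrow> q \<in> polyring n \<Longrightarrow> p + q \<in> polyring n"
  unfolding polyring_def using keys_add[of p q] by blast

lemma polyring_mult:
  assumes "p \<in> polyring n" "q \<in> polyring n"
  shows "p * q \<in> polyring n"
  unfolding polyring_def
proof (intro CollectI ballI)
  fix m assume "m \<in> Poly_Mapping.keys (p * q)"
  then obtain a b where "a \<in> Poly_Mapping.keys p" "b \<in> Poly_Mapping.keys q" "m = a + b"
    using keys_mult[of p q] by blast
  then show "Poly_Mapping.keys m \<subseteq> matvars n"
    using assms by (auto simp: polyring_def keys_add_nat)
qed

lemma ideal_gen_subset_polyring:
  assumes "G \<subseteq> polyring n"
  shows "ideal_gen n G \<subseteq> polyring n"
proof
  fix f assume "f \<in> ideal_gen n G"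
  then show "f \<in> polyring n"
    by induction (use assms in \<open>auto intro: polyring_zero polyring_add polyring_mult\<close>)
qed

lemma ideal_gen_subset:
  assumes "G \<subseteq> ideal_gen n G'"
  shows "ideal_gen n G \<subseteq> ideal_gen n G'"
proof
  fix f assume "f \<in> ideal_gen n G"
  then show "f \<in> ideal_gen n G'"
    by induction (use assms in \<open>auto intro: ideal_gen.intros\<close>)
qed

definition coeff_sum :: "('k \<Rightarrow>\<^sub>0 'a::comm_monoid_add) \<Rightarrow> 'k set \<Rightarrow> 'a" where
  "coeff_sum p B = (\<Sum>m\<in>Poly_Mapping.keys p \<inter> B. Poly_Mapping.lookup p m)"

lemma coeff_sum_conv:
  assumes "finite S" "Poly_Mapping.keys p \<subseteq> S"
  shows "coeff_sum p B = (\<Sum>m\<in>S \<inter> B. Poly_Mapping.lookup p m)"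
  unfolding coeff_sum_def using assms
  by (intro sum.mono_neutral_left) (auto simp: in_keys_iff)

lemma coeff_sum_add: "coeff_sum (p + q) B = coeff_sum p B + coeff_sum q B"
proof -
  let ?S = "Poly_Mapping.keys p \<union> Poly_Mapping.keys q"
  have "coeff_sum (p + q) B = (\<Sum>m\<in>?S \<inter> B. Poly_Mapping.lookup (p + q) m)"
    by (rule coeff_sum_conv) (simp_all add: keys_add)
  also have "\<dots> = coeff_sum p B + coeff_sum q B"
    by (simp add: lookup_add sum.distrib coeff_sum_conv[of ?S])
  finally show ?thesis .
qed

lemma coeff_sum_zero [simp]: "coeff_sum 0 B = 0"
  by (simp add: coeff_sum_def)

lemma coeff_sum_diff:
  "coeff_sum (p - q :: 'k \<Rightarrow>\<^sub>0 'a::ab_group_add) B = coeff_sum p B - coeff_sum q B"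
  using coeff_sum_add[of "p - q" q B] by (simp add: eq_diff_eq)

lemma coeff_sum_single: "coeff_sum (Poly_Mapping.single k c) B = (if k \<in> B then c else 0)"
  by (simp add: coeff_sum_conv[of "{k}"])

lemma coeff_sum_sum: "coeff_sum (\<Sum>i\<in>I. p i) B = (\<Sum>i\<in>I. coeff_sum (p i) B)"
  by (induction I rule: infinite_finite_induct) (simp_all add: coeff_sum_add)

lemma poly_mapping_sum_single:
  "p = (\<Sum>k\<in>Poly_Mapping.keys p. Poly_Mapping.single k (Poly_Mapping.lookup p k))"
  by (rule poly_mapping_eqI) (simp add: lookup_sum lookup_single when_def in_keys_iff)

lemma lookup_single_mult_add:
  fixes a :: "'k::cancel_comm_monoid_add \<Rightarrow>\<^sub>0 'a::comm_semiring_1"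
  shows "Poly_Mapping.lookup (Poly_Mapping.single l c * a) (l + r) = c * Poly_Mapping.lookup a r"
proof -
  have "(\<lambda>q. Poly_Mapping.lookup a q when l + r = l + q) = (\<lambda>q. Poly_Mapping.lookup a q when r = q)"
    by simp
  then have "(\<Sum>q. Poly_Mapping.lookup a q when l + r = l + q) = Poly_Mapping.lookup a r"
    by simp
  then show ?thesis by (simp add: lookup_mult lookup_single when_mult)
qed

lemma coeff_sum_single_mult:
  fixes a :: "'k::cancel_comm_monoid_add \<Rightarrow>\<^sub>0 'a::comm_semiring_1"
  shows "coeff_sum (Poly_Mapping.single l c * a) B = c * coeff_sum a {r. l + r \<in> B}"
proof -
  let ?S = "Poly_Mapping.keys a"
  have "Poly_Mapping.keys (Poly_Mapping.single l c * a) \<subseteq> (+) l ` ?S"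
    using keys_mult[of "Poly_Mapping.single l c" a] by (auto split: if_splits)
  then have "coeff_sum (Poly_Mapping.single l c * a) B
      = (\<Sum>m\<in>(+) l ` ?S \<inter> B. Poly_Mapping.lookup (Poly_Mapping.single l c * a) m)"
    by (intro coeff_sum_conv) auto
  also have "(+) l ` ?S \<inter> B = (+) l ` (?S \<inter> {r. l + r \<in> B})" by auto
  also have "(\<Sum>m\<in>\<dots>. Poly_Mapping.lookup (Poly_Mapping.single l c * a) m)
      = (\<Sum>r\<in>?S \<inter> {r. l + r \<in> B}. c * Poly_Mapping.lookup a r)"
    by (subst sum.reindex) (auto simp: inj_on_def lookup_single_mult_add)
  finally show ?thesis by (simp add: coeff_sum_def sum_distrib_left)
qed

lemma coeff_sum_mult:
  fixes a :: "'k::cancel_comm_monoid_add \<Rightarrow>\<^sub>0 'a::comm_semiring_1"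
  shows "coeff_sum (q * a) B = (\<Sum>l\<in>Poly_Mapping.keys q. Poly_Mapping.lookup q l * coeff_sum a {r. l + r \<in> B})"
proof -
  have "q * a = (\<Sum>l\<in>Poly_Mapping.keys q. Poly_Mapping.single l (Poly_Mapping.lookup q l) * a)"
    by (subst poly_mapping_sum_single[of q]) (simp add: sum_distrib_right)
  then show ?thesis by (simp add: coeff_sum_sum coeff_sum_single_mult)
qed

lemma coeff_sum_fiber_ideal_gen:
  fixes deg :: "mon \<Rightarrow> 'b::cancel_comm_monoid_add" and f :: "'a::field mpoly"
  assumes "f \<in> ideal_gen n G"
    and deg_add: "\<And>a b. deg (a + b) = deg a + deg b"
    and gens: "\<And>g d. g \<in> G \<Longrightarrow> coeff_sum g (deg -` {d}) = 0"
  shows "coeff_sum f (deg -` {d}) = 0"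
  using assms(1)
proof (induction arbitrary: d rule: ideal_gen.induct)
  case (mult q a)
  have "coeff_sum a {r. l + r \<in> deg -` {d}} = 0" for l
  proof (cases "\<exists>r0. deg l + deg r0 = d")
    case True
    then obtain r0 where "deg l + deg r0 = d" by blast
    then have "{r. l + r \<in> deg -` {d}} = deg -` {deg r0}" by (auto simp: deg_add)
    then show ?thesis using mult.IH by simp
  next
    case False
    then have "{r. l + r \<in> deg -` {d}} = {}" by (auto simp: deg_add)
    then show ?thesis by (simp add: coeff_sum_def)
  qed
  then show ?case by (simp add: coeff_sum_mult)
qed (simp_all add: coeff_sum_add gens)

lemma coeff_sum_binomial:
  assumes "A \<in> B \<longleftrightarrow> A' \<in> B"
  shows "coeff_sum (monomial_poly A - monomial_poly A' :: 'a::field mpoly) B = 0"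
  using assms by (simp add: monomial_poly_def coeff_sum_diff coeff_sum_single)

section \<open>Quadratic monomials and the bidegree\<close>

definition mon2 :: "var \<Rightarrow> var \<Rightarrow> mon" where
  "mon2 p q = Poly_Mapping.single p 1 + Poly_Mapping.single q 1"

definition H2_mons :: "nat \<Rightarrow> mon set" where
  "H2_mons n =
     {mon2 (i, k) (h, j) | i j h k.
        1 \<le> i \<and> i < h \<and> h \<le> n \<and> 1 \<le> j \<and> j < k \<and> k \<le> n \<and> (i = j \<or> h = k)}
   \<union> {mon2 (i, j) (h, k) | i j h k.
        1 \<le> i \<and> i < h \<and> h \<le> n \<and> 1 \<le> j \<and> j < k \<and> k \<le> n \<and> i \<noteq> j \<and> h \<noteq> k}"

lemma lookup_mon2: "Poly_Mapping.lookup (mon2 p q) x = (if p = x then 1 else 0) + (if q = x then 1 else 0)"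
  unfolding mon2_def by (simp add: lookup_add lookup_single when_def)

lemma keys_mon2: "Poly_Mapping.keys (mon2 p q) = {p, q}"
  by (auto simp: in_keys_iff lookup_mon2 split: if_splits)

lemma mon2_commute: "mon2 p q = mon2 q p"
  unfolding mon2_def by (simp add: add.commute)

lemma mdeg_mon2: "mdeg (mon2 p q) = 2"
  by (simp add: mon2_def mdeg_add mdeg_single)

lemma mon2_swap_neq:
  assumes "i < h" "j \<noteq> k"
  shows "mon2 (i, j) (h, k) \<noteq> mon2 (i, k) (h, j)"
proof
  assume "mon2 (i, j) (h, k) = mon2 (i, k) (h, j)"
  then have "Poly_Mapping.lookup (mon2 (i, j) (h, k)) (i, j) = Poly_Mapping.lookup (mon2 (i, k) (h, j)) (i, j)"
    by simp
  with assms show False by (simp add: lookup_mon2)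
qed

lemma X_mult: "X a b * X c d = monomial_poly (mon2 (a, b) (c, d))"
  by (simp add: X_def monomial_poly_def mult_single mon2_def)

lemma H2_gens_eq: "H2_gens n = monomial_poly ` H2_mons n"
  unfolding H2_gens_def H2_mons_def X_mult by blast

lemma minors2_eq:
  "minors2 n = {monomial_poly (mon2 (i, j) (h, k)) - monomial_poly (mon2 (i, k) (h, j)) | i j h k.
      1 \<le> i \<and> i < h \<and> h \<le> n \<and> 1 \<le> j \<and> j < k \<and> k \<le> n}"
  unfolding minors2_def X_mult ..

lemma keys_monomial_poly_diff:
  "A \<noteq> B \<Longrightarrow> Poly_Mapping.keys (monomial_poly A - monomial_poly B :: 'a::field mpoly) = {A, B}"
  by (auto simp: monomial_poly_def in_keys_iff lookup_minus lookup_single when_def split: if_splits)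

definition row_deg :: "nat \<Rightarrow> mon \<Rightarrow> nat \<Rightarrow> nat" where
  "row_deg n m i = (\<Sum>j\<in>{1..n}. Poly_Mapping.lookup m (i, j))"

definition col_deg :: "nat \<Rightarrow> mon \<Rightarrow> nat \<Rightarrow> nat" where
  "col_deg n m j = (\<Sum>i\<in>{1..n}. Poly_Mapping.lookup m (i, j))"

definition bideg :: "nat \<Rightarrow> mon \<Rightarrow> (nat \<Rightarrow> nat) \<times> (nat \<Rightarrow> nat)" where
  "bideg n m = (row_deg n m, col_deg n m)"

lemma row_deg_add: "row_deg n (a + b) i = row_deg n a i + row_deg n b i"
  by (simp add: row_deg_def lookup_add sum.distrib)

lemma col_deg_add: "col_deg n (a + b) j = col_deg n a j + col_deg n b j"
  by (simp add: col_deg_def lookup_add sum.distrib)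

lemma row_deg_single: "row_deg n (Poly_Mapping.single (a, b) 1) i = (if a = i \<and> b \<in> {1..n} then 1 else 0)"
  unfolding row_deg_def lookup_single when_def by (cases "a = i") simp_all

lemma col_deg_single: "col_deg n (Poly_Mapping.single (a, b) 1) j = (if b = j \<and> a \<in> {1..n} then 1 else 0)"
  unfolding col_deg_def lookup_single when_def by (cases "b = j") simp_all

lemma row_deg_mon2:
  "row_deg n (mon2 (a, b) (c, d)) i = (if a = i \<and> b \<in> {1..n} then 1 else 0) + (if c = i \<and> d \<in> {1..n} then 1 else 0)"
  unfolding mon2_def row_deg_add row_deg_single ..

lemma col_deg_mon2:
  "col_deg n (mon2 (a, b) (c, d)) j = (if b = j \<and> a \<in> {1..n} then 1 else 0) + (if d = j \<and> c \<in> {1..n} then 1 else 0)"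
  unfolding mon2_def col_deg_add col_deg_single ..

lemma bideg_add: "bideg n (a + b) = bideg n a + bideg n b"
  by (simp add: bideg_def row_deg_add col_deg_add fun_eq_iff)

lemma bideg_eq_iff: "bideg n a = bideg n b \<longleftrightarrow> row_deg n a = row_deg n b \<and> col_deg n a = col_deg n b"
  by (simp add: bideg_def)

lemma row_deg_pos_iff: "0 < row_deg n m i \<longleftrightarrow> (\<exists>j\<in>{1..n}. 0 < Poly_Mapping.lookup m (i, j))"
  unfolding row_deg_def zero_less_iff_neq_zero sum_eq_0_iff[OF finite_atLeastAtMost] by auto

lemma col_deg_pos_iff: "0 < col_deg n m j \<longleftrightarrow> (\<exists>i\<in>{1..n}. 0 < Poly_Mapping.lookup m (i, j))"
  unfolding col_deg_def zero_less_iff_neq_zero sum_eq_0_iff[OF finite_atLeastAtMost] by auto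

lemma lookup_le_row_deg: "j \<in> {1..n} \<Longrightarrow> Poly_Mapping.lookup m (i, j) \<le> row_deg n m i"
  unfolding row_deg_def by (rule member_le_sum) auto

lemma lookup_le_col_deg: "i \<in> {1..n} \<Longrightarrow> Poly_Mapping.lookup m (i, j) \<le> col_deg n m j"
  unfolding col_deg_def by (rule member_le_sum) auto

lemma bideg_mon2_swap:
  assumes "i \<in> {1..n}" "h \<in> {1..n}" "j \<in> {1..n}" "k \<in> {1..n}"
  shows "bideg n (mon2 (i, j) (h, k)) = bideg n (mon2 (i, k) (h, j))"
  using assms by (simp add: bideg_def row_deg_mon2 col_deg_mon2 fun_eq_iff)

lemma minors2_subset_polyring: "minors2 n \<subseteq> (polyring n :: 'a::field mpoly set)"
proof
  fix f :: "'a mpoly" assume "f \<in> minors2 n"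
  then obtain i j h k where ijhk: "1 \<le> i" "i < h" "h \<le> n" "1 \<le> j" "j < k" "k \<le> n"
    and f: "f = monomial_poly (mon2 (i, j) (h, k)) - monomial_poly (mon2 (i, k) (h, j))"
    unfolding minors2_eq by blast
  then have "Poly_Mapping.keys f = {mon2 (i, j) (h, k), mon2 (i, k) (h, j)}"
    using mon2_swap_neq[of i h j k] by (simp add: keys_monomial_poly_diff)
  with ijhk show "f \<in> polyring n" by (auto simp: polyring_def keys_mon2 matvars_def)
qed

lemma coeff_sum_fiber_minors2:
  fixes f :: "'a::field mpoly"
  assumes "f \<in> minors2 n"
  shows "coeff_sum f (bideg n -` {d}) = 0"
proof -
  obtain i j h k where ijhk: "1 \<le> i" "i < h" "h \<le> n" "1 \<le> j" "j < k" "k \<le> n"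
    and f: "f = monomial_poly (mon2 (i, j) (h, k)) - monomial_poly (mon2 (i, k) (h, j))"
    using assms unfolding minors2_eq by blast
  then show ?thesis using bideg_mon2_swap[of i n h j k] by (simp add: coeff_sum_binomial)
qed

section \<open>Standard monomials\<close>

definition H2_standard :: "nat \<Rightarrow> mon \<Rightarrow> bool" where
  "H2_standard n m \<longleftrightarrow> (\<nexists>u g. g \<in> H2_mons n \<and> m = u + g)"

lemma H2_standard_add_left: "H2_standard n (u + m) \<Longrightarrow> H2_standard n m"
  unfolding H2_standard_def by (metis add.assoc)

lemma single_add_minus_single:
  fixes m :: "'k \<Rightarrow>\<^sub>0 nat"
  assumes "0 < Poly_Mapping.lookup m p"
  shows "Poly_Mapping.single p 1 + (m - Poly_Mapping.single p 1) = m"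
proof (rule poly_mapping_eqI)
  fix x
  show "Poly_Mapping.lookup (Poly_Mapping.single p 1 + (m - Poly_Mapping.single p 1)) x = Poly_Mapping.lookup m x"
    using assms by (cases "x = p") (simp_all add: lookup_add lookup_minus lookup_single)
qed

lemma not_H2_standardI:
  assumes "mon2 p q \<in> H2_mons n" "p \<noteq> q" "0 < Poly_Mapping.lookup m p" "0 < Poly_Mapping.lookup m q"
  shows "\<not> H2_standard n m"
proof -
  have "m = (m - mon2 p q) + mon2 p q"
    by (rule poly_mapping_eqI) (use assms(2-4) in \<open>auto simp: lookup_add lookup_minus lookup_mon2\<close>)
  then show ?thesis using assms(1) unfolding H2_standard_def by blast
qed

lemma H2_monsI1:
  "1 \<le> i \<Longrightarrow> i < h \<Longrightarrow> h \<le> n \<Longrightarrow> 1 \<le> j \<Longrightarrow> j < k \<Longrightarrow> k \<le> n \<Longrightarrow> i = j \<or> h = k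
    \<Longrightarrow> mon2 (i, k) (h, j) \<in> H2_mons n"
  unfolding H2_mons_def by blast

lemma H2_monsI2:
  "1 \<le> i \<Longrightarrow> i < h \<Longrightarrow> h \<le> n \<Longrightarrow> 1 \<le> j \<Longrightarrow> j < k \<Longrightarrow> k \<le> n \<Longrightarrow> i \<noteq> j \<Longrightarrow> h \<noteq> k
    \<Longrightarrow> mon2 (i, j) (h, k) \<in> H2_mons n"
  unfolding H2_mons_def by blast

lemma mon2_across_diag_in_H2_mons:
  assumes "t \<in> {1..n}" "x \<in> {1..n}" "y \<in> {1..n}" "x \<noteq> t" "y \<noteq> t"
  shows "mon2 (t, y) (x, t) \<in> H2_mons n"
proof (cases "t < x"; cases "t < y")
  assume "t < x" "t < y"
  then show ?thesis using H2_monsI1[of t x n t y] assms by auto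
next
  assume "t < x" "\<not> t < y"
  then show ?thesis using H2_monsI2[of t x n y t] assms by auto
next
  assume "\<not> t < x" "t < y"
  then show ?thesis using H2_monsI2[of x t n t y] assms by (auto simp: mon2_commute)
next
  assume "\<not> t < x" "\<not> t < y"
  then show ?thesis using H2_monsI1[of x t n y t] assms by (auto simp: mon2_commute)
qed

lemma H2_standard_diag:
  assumes std: "H2_standard n m" and t: "t \<in> {1..n}"
    and "0 < row_deg n m t" "0 < col_deg n m t"
  shows "0 < Poly_Mapping.lookup m (t, t)"
proof (rule ccontr)
  assume no_diag: "\<not> 0 < Poly_Mapping.lookup m (t, t)"
  obtain y where y: "y \<in> {1..n}" "0 < Poly_Mapping.lookup m (t, y)"
    using \<open>0 < row_deg n m t\<close> row_deg_pos_iff by blast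
  obtain x where x: "x \<in> {1..n}" "0 < Poly_Mapping.lookup m (x, t)"
    using \<open>0 < col_deg n m t\<close> col_deg_pos_iff by blast
  have "x \<noteq> t" "y \<noteq> t" using x y no_diag by auto
  then have "mon2 (t, y) (x, t) \<in> H2_mons n" using mon2_across_diag_in_H2_mons t x y by blast
  then show False using not_H2_standardI[OF _ _ y(2) x(2)] std \<open>x \<noteq> t\<close> by blast
qed

lemma H2_standard_corner:
  assumes std: "H2_standard n m"
    and no_diag: "\<And>t. t \<in> {1..n} \<Longrightarrow> 0 < row_deg n m t \<Longrightarrow> col_deg n m t = 0"
    and a: "a \<in> {1..n}" "0 < row_deg n m a" "\<forall>t\<in>{1..n}. 0 < row_deg n m t \<longrightarrow> a \<le> t"
    and b: "b \<in> {1..n}" "0 < col_deg n m b" "\<forall>t\<in>{1..n}. 0 < col_deg n m t \<longrightarrow> t \<le> b"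
  shows "0 < Poly_Mapping.lookup m (a, b)"
proof (rule ccontr)
  assume zero: "\<not> 0 < Poly_Mapping.lookup m (a, b)"
  obtain y where y: "y \<in> {1..n}" "0 < Poly_Mapping.lookup m (a, y)"
    using a(2) row_deg_pos_iff by blast
  obtain x where x: "x \<in> {1..n}" "0 < Poly_Mapping.lookup m (x, b)"
    using b(2) col_deg_pos_iff by blast
  have col_y: "0 < col_deg n m y" and row_x: "0 < row_deg n m x"
    using lookup_le_col_deg[OF a(1), of m y] lookup_le_row_deg[OF b(1), of m x] x y by linarith+
  have "y \<le> b" "a \<le> x" using a(3) b(3) x(1) y(1) col_y row_x by blast+
  moreover have "y \<noteq> b" "x \<noteq> a" using x(2) y(2) zero by auto
  ultimately have "y < b" "a < x" by simp_all
  moreover have "a \<noteq> y" "x \<noteq> b" using no_diag a(1,2) b(1,2) col_y row_x by auto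
  ultimately have "mon2 (a, y) (x, b) \<in> H2_mons n"
    using H2_monsI2[of a x n y b] a(1) b(1) x(1) y(1) by auto
  then show False using not_H2_standardI[OF _ _ y(2) x(2)] std \<open>a < x\<close> by blast
qed

lemma first_row_last_col_exist:
  assumes "Poly_Mapping.keys m \<subseteq> matvars n" "m \<noteq> 0"
  obtains a b where "a \<in> {1..n}" "0 < row_deg n m a" "\<forall>t\<in>{1..n}. 0 < row_deg n m t \<longrightarrow> a \<le> t"
    and "b \<in> {1..n}" "0 < col_deg n m b" "\<forall>t\<in>{1..n}. 0 < col_deg n m t \<longrightarrow> t \<le> b"
proof -
  from \<open>m \<noteq> 0\<close> obtain x where x: "x \<in> Poly_Mapping.keys m" by (metis keys_eq_empty ex_in_conv)
  obtain a0 b0 where x_eq: "x = (a0, b0)" by (cases x)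
  have "a0 \<in> {1..n}" "b0 \<in> {1..n}" using x x_eq assms(1) by (auto simp: matvars_def)
  moreover have "0 < Poly_Mapping.lookup m (a0, b0)" using x x_eq by (simp add: in_keys_iff)
  ultimately have "0 < row_deg n m a0" "0 < col_deg n m b0"
    using lookup_le_row_deg[of b0 n m a0] lookup_le_col_deg[of a0 n m b0] by linarith+
  define A where "A = {t\<in>{1..n}. 0 < row_deg n m t}"
  define B where "B = {t\<in>{1..n}. 0 < col_deg n m t}"
  have "a0 \<in> A" "b0 \<in> B"
    using \<open>a0 \<in> {1..n}\<close> \<open>b0 \<in> {1..n}\<close> \<open>0 < row_deg n m a0\<close> \<open>0 < col_deg n m b0\<close>
    by (simp_all add: A_def B_def)
  moreover have "finite A" "finite B" by (simp_all add: A_def B_def)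
  ultimately have "Min A \<in> A" "Max B \<in> B" using Min_in Max_in by blast+
  moreover have "Min A \<le> t" if "t \<in> {1..n}" "0 < row_deg n m t" for t
    using that by (simp add: A_def)
  moreover have "t \<le> Max B" if "t \<in> {1..n}" "0 < col_deg n m t" for t
    using that by (simp add: B_def)
  ultimately show thesis using that[of "Min A" "Max B"] by (simp add: A_def B_def)
qed

lemma H2_standard_common_var:
  assumes "Poly_Mapping.keys m \<subseteq> matvars n" "m \<noteq> 0"
    and std: "H2_standard n m" "H2_standard n m'" and "bideg n m = bideg n m'"
  obtains p where "0 < Poly_Mapping.lookup m p" "0 < Poly_Mapping.lookup m' p"
proof -
  have rows: "row_deg n m' = row_deg n m" and cols: "col_deg n m' = col_deg n m"
    using assms(5) by (simp_all add: bideg_eq_iff)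
  show thesis
  proof (cases "\<exists>t\<in>{1..n}. 0 < row_deg n m t \<and> 0 < col_deg n m t")
    case True
    then obtain t where t: "t \<in> {1..n}" "0 < row_deg n m t" "0 < col_deg n m t" by blast
    show thesis
      by (rule that[of "(t, t)"]; rule H2_standard_diag) (use std t rows cols in auto)
  next
    case False
    have no_diag: "col_deg n m t = 0" if "t \<in> {1..n}" "0 < row_deg n m t" for t
      using False that by (meson neq0_conv)
    obtain a b where a: "a \<in> {1..n}" "0 < row_deg n m a" "\<forall>t\<in>{1..n}. 0 < row_deg n m t \<longrightarrow> a \<le> t"
      and b: "b \<in> {1..n}" "0 < col_deg n m b" "\<forall>t\<in>{1..n}. 0 < col_deg n m t \<longrightarrow> t \<le> b"
      by (rule first_row_last_col_exist[OF assms(1,2)])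
    have "0 < Poly_Mapping.lookup m (a, b)"
      by (rule H2_standard_corner[OF std(1) no_diag a b])
    moreover have "0 < Poly_Mapping.lookup m' (a, b)"
      by (rule H2_standard_corner[OF std(2)]) (use no_diag a b in \<open>auto simp: rows cols\<close>)
    ultimately show thesis by (rule that)
  qed
qed

lemma H2_standard_bideg_inj:
  assumes "Poly_Mapping.keys m \<subseteq> matvars n" "Poly_Mapping.keys m' \<subseteq> matvars n"
    and "H2_standard n m" "H2_standard n m'" "bideg n m = bideg n m'"
  shows "m = m'"
  using assms
proof (induction "mdeg m" arbitrary: m m' rule: less_induct)
  case less
  show ?case
  proof (cases "m = 0")
    case True
    have "Poly_Mapping.lookup m' (a, b) = 0" if "(a, b) \<in> Poly_Mapping.keys m'" for a b
    proof -
      have "b \<in> {1..n}" using that less.prems(2) by (auto simp: matvars_def)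
      then have "Poly_Mapping.lookup m' (a, b) \<le> row_deg n m' a" by (rule lookup_le_row_deg)
      also have "\<dots> = row_deg n 0 a" using less.prems(5) True by (simp add: bideg_eq_iff)
      finally show ?thesis by (simp add: row_deg_def)
    qed
    then have "m' = 0" by (metis in_keys_iff keys_eq_empty prod.collapse ex_in_conv)
    then show ?thesis using True by simp
  next
    case False
    obtain p where p: "0 < Poly_Mapping.lookup m p" "0 < Poly_Mapping.lookup m' p"
      using H2_standard_common_var[OF less.prems(1) False less.prems(3-5)] by blast
    define m1 m1' where "m1 = m - Poly_Mapping.single p 1" and "m1' = m' - Poly_Mapping.single p 1"
    have m: "m = Poly_Mapping.single p 1 + m1" and m': "m' = Poly_Mapping.single p 1 + m1'"
      using single_add_minus_single p unfolding m1_def m1'_def by metis+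
    have "mdeg m1 < mdeg m" using m by (simp add: mdeg_add mdeg_single)
    moreover have "Poly_Mapping.keys m1 \<subseteq> matvars n" "Poly_Mapping.keys m1' \<subseteq> matvars n"
      using less.prems(1,2) m m' by (auto simp: keys_add_nat)
    moreover have "H2_standard n m1" "H2_standard n m1'"
      using less.prems(3,4) m m' H2_standard_add_left by metis+
    moreover have "bideg n m1 = bideg n m1'"
      using less.prems(5) unfolding m m' bideg_add by simp
    ultimately have "m1 = m1'" using less.hyps by blast
    then show ?thesis using m m' by simp
  qed
qed

lemma finite_bounded_monomials:
  assumes "finite V"
  shows "finite {w :: 'k \<Rightarrow>\<^sub>0 nat. Poly_Mapping.keys w \<subseteq> V \<and> (\<forall>x. Poly_Mapping.lookup w x \<le> N)}"
    (is "finite ?W")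
proof -
  have "Poly_Mapping.lookup ` ?W \<subseteq> {f. \<forall>x. (x \<in> V \<longrightarrow> f x \<in> {0..N}) \<and> (x \<notin> V \<longrightarrow> f x = 0)}"
    by (auto simp: in_keys_iff)
  moreover have "finite {f. \<forall>x. (x \<in> V \<longrightarrow> f x \<in> {0..N}) \<and> (x \<notin> V \<longrightarrow> f x = (0::nat))}"
    using assms by (intro finite_set_of_finite_funs) simp_all
  ultimately have "finite (Poly_Mapping.lookup ` ?W)" by (rule finite_subset)
  moreover have "inj_on Poly_Mapping.lookup ?W" by (rule inj_onI) (simp add: poly_mapping_eqI)
  ultimately show ?thesis by (rule finite_imageD)
qed

lemma finite_bideg_fiber: "finite {w. Poly_Mapping.keys w \<subseteq> matvars n \<and> bideg n w = bideg n m}"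
proof -
  define N where "N = (\<Sum>i\<in>{1..n}. row_deg n m i)"
  have "Poly_Mapping.lookup w x \<le> N" if "Poly_Mapping.keys w \<subseteq> matvars n" "bideg n w = bideg n m" for w x
  proof (cases "x \<in> Poly_Mapping.keys w")
    case True
    obtain a b where x: "x = (a, b)" by fastforce
    then have ab: "a \<in> {1..n}" "b \<in> {1..n}" using True that(1) by (auto simp: matvars_def)
    have "Poly_Mapping.lookup w (a, b) \<le> row_deg n w a" by (rule lookup_le_row_deg[OF ab(2)])
    also have "\<dots> = row_deg n m a" using that(2) by (simp add: bideg_eq_iff)
    also have "\<dots> \<le> N" unfolding N_def by (rule member_le_sum) (use ab in auto)
    finally show ?thesis using x by simp
  qed (simp add: in_keys_iff)
  then show ?thesis
    by (intro finite_subset[OF _ finite_bounded_monomials[of "matvars n" N]])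
      (auto simp: matvars_def)
qed

section \<open>Leading monomials of I(2,n)\<close>

lemma revlex_less_mon2:
  assumes "strict_total_on V R" "finite V"
    and "q \<in> {q1, q2}" "q \<in> V" "p1 \<in> V" "p2 \<in> V" "R q p1" "R q p2"
  shows "revlex_less V R (mon2 q1 q2) (mon2 p1 p2)"
  by (rule revlex_less_if_var_below[OF assms(1,2)]) (use assms(3-) in \<open>auto simp: mdeg_mon2 keys_mon2\<close>)

lemma I2_subset_polyring: "I2 n \<subseteq> polyring n"
  unfolding I2_def by (rule ideal_gen_subset_polyring[OF minors2_subset_polyring])

lemma coeff_sum_fiber_I2: "f \<in> I2 n \<Longrightarrow> coeff_sum f (bideg n -` {d}) = 0"
  unfolding I2_def by (rule coeff_sum_fiber_ideal_gen[OF _ bideg_add coeff_sum_fiber_minors2])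

lemma minor_with_keys:
  assumes "1 \<le> i" "i < h" "h \<le> n" "1 \<le> j" "j < k" "k \<le> n"
  obtains f where "f \<in> minors2 n" "Poly_Mapping.keys f = {mon2 (i, j) (h, k), mon2 (i, k) (h, j)}"
proof
  show "monomial_poly (mon2 (i, j) (h, k)) - monomial_poly (mon2 (i, k) (h, j)) \<in> minors2 n"
    unfolding minors2_eq using assms by blast
  show "Poly_Mapping.keys (monomial_poly (mon2 (i, j) (h, k)) - monomial_poly (mon2 (i, k) (h, j)) :: 'a mpoly)
      = {mon2 (i, j) (h, k), mon2 (i, k) (h, j)}"
    using mon2_swap_neq[of i h j k] assms by (simp add: keys_monomial_poly_diff)
qed

context
  fixes n :: nat and R :: "var \<Rightarrow> var \<Rightarrow> bool"
  assumes order: "strict_total_on (matvars n) R"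
    and diag_below: "\<And>i a b. (i, i) \<in> matvars n \<Longrightarrow> (a, b) \<in> matvars n \<Longrightarrow> a \<noteq> b \<Longrightarrow> R (i, i) (a, b)"
    and offdiag: "\<And>i j h k. (i, j) \<in> matvars n \<Longrightarrow> (h, k) \<in> matvars n \<Longrightarrow> i \<noteq> j \<Longrightarrow> h \<noteq> k \<Longrightarrow>
        \<bar>int i - int j\<bar> < \<bar>int h - int k\<bar> \<Longrightarrow> R (h, k) (i, j)"
begin

lemma revlex_less_minor_diag_term:
  assumes ijhk: "1 \<le> i" "i < h" "h \<le> n" "1 \<le> j" "j < k" "k \<le> n" and "i = j \<or> h = k"
  shows "revlex_less (matvars n) R (mon2 (i, j) (h, k)) (mon2 (i, k) (h, j))"
proof -
  have vars: "(i, j) \<in> matvars n" "(i, k) \<in> matvars n" "(h, j) \<in> matvars n" "(h, k) \<in> matvars n"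
    using ijhk by (auto simp: matvars_def)
  \<comment> \<open>the diagonal variable of the first term lies below both variables of the second\<close>
  show ?thesis
  proof (cases "i = j")
    case True
    show ?thesis
      by (rule revlex_less_mon2[OF order finite_matvars, where q = "(i, j)"])
        (use vars ijhk True diag_below in auto)
  next
    case False
    then have "h = k" using \<open>i = j \<or> h = k\<close> by blast
    show ?thesis
      by (rule revlex_less_mon2[OF order finite_matvars, where q = "(h, k)"])
        (use vars ijhk \<open>h = k\<close> diag_below in auto)
  qed
qed

lemma revlex_less_minor_antidiag_term:
  assumes ijhk: "1 \<le> i" "i < h" "h \<le> n" "1 \<le> j" "j < k" "k \<le> n" and "i \<noteq> j" "h \<noteq> k"
  shows "revlex_less (matvars n) R (mon2 (i, k) (h, j)) (mon2 (i, j) (h, k))"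
proof -
  have vars: "(i, j) \<in> matvars n" "(i, k) \<in> matvars n" "(h, j) \<in> matvars n" "(h, k) \<in> matvars n"
    using ijhk by (auto simp: matvars_def)
  \<comment> \<open>one of x_ik, x_hj is diagonal or farther from the diagonal than both x_ij and x_hk\<close>
  consider "i = k" | "h = j"
    | "\<bar>int i - int j\<bar> < \<bar>int i - int k\<bar>" "\<bar>int h - int k\<bar> < \<bar>int i - int k\<bar>" "i \<noteq> k"
    | "\<bar>int i - int j\<bar> < \<bar>int h - int j\<bar>" "\<bar>int h - int k\<bar> < \<bar>int h - int j\<bar>" "h \<noteq> j"
  proof -
    have "\<bar>int i - int j\<bar> < \<bar>int i - int k\<bar> \<and> \<bar>int h - int k\<bar> < \<bar>int i - int k\<bar> \<or>
        \<bar>int i - int j\<bar> < \<bar>int h - int j\<bar> \<and> \<bar>int h - int k\<bar> < \<bar>int h - int j\<bar>"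
      using ijhk by (auto simp: abs_if)
    then show thesis using that by blast
  qed
  then show ?thesis
  proof cases
    case 1
    show ?thesis
      by (rule revlex_less_mon2[OF order finite_matvars, where q = "(i, k)"])
        (use vars 1 assms(7,8) diag_below in auto)
  next
    case 2
    show ?thesis
      by (rule revlex_less_mon2[OF order finite_matvars, where q = "(h, j)"])
        (use vars 2 assms(7,8) diag_below in auto)
  next
    case 3
    show ?thesis
      by (intro revlex_less_mon2[OF order finite_matvars, where q = "(i, k)"] offdiag)
        (use vars 3 assms(7,8) in auto)
  next
    case 4
    show ?thesis
      by (intro revlex_less_mon2[OF order finite_matvars, where q = "(h, j)"] offdiag)
        (use vars 4 assms(7,8) in auto)
  qed
qed

lemma H2_mon_exchange:
  assumes "g \<in> H2_mons n"
  obtains i j h k g' where "1 \<le> i" "i < h" "h \<le> n" "1 \<le> j" "j < k" "k \<le> n"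
    "{g, g'} = {mon2 (i, j) (h, k), mon2 (i, k) (h, j)}" "revlex_less (matvars n) R g' g"
  using assms unfolding H2_mons_def
proof (elim UnE CollectE exE conjE)
  fix i j h k
  assume ijhk: "1 \<le> i" "i < h" "h \<le> n" "1 \<le> j" "j < k" "k \<le> n"
  {
    assume g: "g = mon2 (i, k) (h, j)" and "i = j \<or> h = k"
    have less: "revlex_less (matvars n) R (mon2 (i, j) (h, k)) g"
      unfolding g by (rule revlex_less_minor_diag_term[OF ijhk \<open>i = j \<or> h = k\<close>])
    show thesis by (rule that[OF ijhk _ less]) (simp add: g insert_commute)
  next
    assume g: "g = mon2 (i, j) (h, k)" and "i \<noteq> j" "h \<noteq> k"
    have less: "revlex_less (matvars n) R (mon2 (i, k) (h, j)) g"
      unfolding g by (rule revlex_less_minor_antidiag_term[OF ijhk \<open>i \<noteq> j\<close> \<open>h \<noteq> k\<close>])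
    show thesis by (rule that[OF ijhk _ less]) (simp add: g)
  }
qed

lemma H2_standard_least_in_fiber:
  assumes std: "H2_standard n m" and keys_m: "Poly_Mapping.keys m \<subseteq> matvars n"
    and keys_w: "Poly_Mapping.keys w \<subseteq> matvars n" and "bideg n w = bideg n m" "w \<noteq> m"
  shows "revlex_less (matvars n) R m w"
proof -
  define F where "F = {w. Poly_Mapping.keys w \<subseteq> matvars n \<and> bideg n w = bideg n m}"
  have "finite F" using finite_bideg_fiber by (simp add: F_def)
  moreover have "F \<noteq> {}" using keys_m by (auto simp: F_def)
  ultimately obtain \<mu> where \<mu>: "\<mu> \<in> F" "\<forall>v\<in>F. v \<noteq> \<mu> \<longrightarrow> \<not> revlex_less (matvars n) R v \<mu>"
    using Finite_Set.bex_min_element[OF _ asymp_on_revlex_less[OF order] transp_on_revlex_less[OF order]]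
    by blast
  have "H2_standard n \<mu>"
  proof (rule ccontr)
    assume "\<not> H2_standard n \<mu>"
    then obtain u g where g: "g \<in> H2_mons n" and \<mu>_eq: "\<mu> = u + g" unfolding H2_standard_def by blast
    obtain i j h k g' where ijhk: "1 \<le> i" "i < h" "h \<le> n" "1 \<le> j" "j < k" "k \<le> n"
      and swap: "{g, g'} = {mon2 (i, j) (h, k), mon2 (i, k) (h, j)}"
      and less: "revlex_less (matvars n) R g' g"
      by (rule H2_mon_exchange[OF g])
    have "bideg n (mon2 (i, j) (h, k)) = bideg n (mon2 (i, k) (h, j))"
      by (rule bideg_mon2_swap) (use ijhk in auto)
    then have "bideg n g' = bideg n g" using swap by (metis doubleton_eq_iff)
    then have "bideg n (u + g') = bideg n m" using \<mu>(1) by (simp add: F_def \<mu>_eq bideg_add)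
    moreover have "g' \<in> {mon2 (i, j) (h, k), mon2 (i, k) (h, j)}" using swap by blast
    then have "Poly_Mapping.keys g' \<subseteq> matvars n" using ijhk by (auto simp: keys_mon2 matvars_def)
    then have "Poly_Mapping.keys (u + g') \<subseteq> matvars n"
      using \<mu>(1) by (auto simp: F_def \<mu>_eq keys_add_nat)
    ultimately have "u + g' \<in> F" by (simp add: F_def)
    moreover have "revlex_less (matvars n) R (u + g') \<mu>"
      unfolding \<mu>_eq by (rule revlex_less_add_left[OF order less])
    moreover from this have "u + g' \<noteq> \<mu>" using revlex_less_irrefl[OF order] by auto
    ultimately show False using \<mu>(2) by blast
  qed
  then have "\<mu> = m"
    using H2_standard_bideg_inj[of \<mu> n m] \<mu>(1) keys_m std by (simp add: F_def)
  moreover have "w \<in> F" using keys_w assms(4) by (simp add: F_def)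
  ultimately show ?thesis
    using revlex_less_total[OF order finite_matvars keys_w keys_m assms(5)] \<mu>(2) assms(5) by blast
qed

lemma lead_mon_I2_not_standard:
  assumes "f \<in> I2 n" "f \<noteq> 0"
  shows "\<not> H2_standard n (lead_mon (matvars n) R f)"
proof
  let ?m = "lead_mon (matvars n) R f"
  assume std: "H2_standard n ?m"
  have keys_f: "Poly_Mapping.keys m \<subseteq> matvars n" if "m \<in> Poly_Mapping.keys f" for m
    using I2_subset_polyring assms(1) that unfolding polyring_def by blast
  note lead = lead_mon_greatest[OF order finite_matvars assms(2) keys_f]
  let ?B = "bideg n -` {bideg n ?m}"
  have "Poly_Mapping.keys f \<inter> ?B = {?m}"
  proof (intro equalityI subsetI)
    fix w assume w: "w \<in> Poly_Mapping.keys f \<inter> ?B"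
    show "w \<in> {?m}"
    proof (rule ccontr)
      assume "w \<notin> {?m}"
      then have "revlex_less (matvars n) R ?m w"
        using H2_standard_least_in_fiber[OF std keys_f[OF lead(1)] keys_f] w by auto
      moreover have "revlex_less (matvars n) R w ?m" using lead(2) w \<open>w \<notin> {?m}\<close> by blast
      ultimately show False using revlex_less_asym[OF order] by blast
    qed
  qed (use lead(1) in simp)
  then have "coeff_sum f ?B = Poly_Mapping.lookup f ?m" by (simp add: coeff_sum_def)
  moreover have "Poly_Mapping.lookup f ?m \<noteq> 0" using lead(1) by (simp add: in_keys_iff)
  ultimately show False using coeff_sum_fiber_I2[OF assms(1)] by simp
qed

lemma initial_ideal_I2_subset: "initial_ideal n R (I2 n :: 'a::field mpoly set) \<subseteq> H2 n"
  unfolding initial_ideal_def H2_def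
proof (rule ideal_gen_subset, rule subsetI)
  fix x :: "'a mpoly"
  assume "x \<in> {monomial_poly (lead_mon (matvars n) R f) |f. f \<in> (I2 n :: 'a mpoly set) \<and> f \<noteq> 0}"
  then obtain f :: "'a mpoly" where f: "f \<in> I2 n" "f \<noteq> 0"
    and x: "x = monomial_poly (lead_mon (matvars n) R f)" by blast
  obtain u g where g: "g \<in> H2_mons n" and lead: "lead_mon (matvars n) R f = u + g"
    using lead_mon_I2_not_standard[OF f] unfolding H2_standard_def by blast
  have "lead_mon (matvars n) R f \<in> Poly_Mapping.keys f"
    by (rule lead_mon_greatest(1)[OF order finite_matvars f(2)])
      (use I2_subset_polyring f(1) in \<open>auto simp: polyring_def\<close>)
  then have "Poly_Mapping.keys (lead_mon (matvars n) R f) \<subseteq> matvars n"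
    using I2_subset_polyring f(1) unfolding polyring_def by blast
  then have "monomial_poly u \<in> (polyring n :: 'a mpoly set)"
    using lead by (simp add: polyring_def monomial_poly_def keys_add_nat)
  moreover have "monomial_poly g \<in> (H2_gens n :: 'a mpoly set)" using g by (simp add: H2_gens_eq)
  moreover have "x = monomial_poly u * monomial_poly g"
    by (simp add: x lead monomial_poly_def mult_single)
  ultimately show "x \<in> ideal_gen n (H2_gens n)" by (auto intro: ideal_gen.intros)
qed

lemma H2_subset_initial_ideal_I2: "H2 n \<subseteq> initial_ideal n R (I2 n :: 'a::field mpoly set)"
  unfolding initial_ideal_def H2_def
proof (rule ideal_gen_subset, rule subsetI)
  fix x :: "'a mpoly" assume "x \<in> H2_gens n"
  then obtain g where g: "g \<in> H2_mons n" and x: "x = monomial_poly g" by (auto simp: H2_gens_eq)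
  obtain i j h k g' where ijhk: "1 \<le> i" "i < h" "h \<le> n" "1 \<le> j" "j < k" "k \<le> n"
    and swap: "{g, g'} = {mon2 (i, j) (h, k), mon2 (i, k) (h, j)}"
    and less: "revlex_less (matvars n) R g' g"
    by (rule H2_mon_exchange[OF g])
  obtain f :: "'a mpoly" where f: "f \<in> minors2 n" "Poly_Mapping.keys f = {g, g'}"
    by (rule minor_with_keys[OF ijhk]) (simp add: swap)
  have "lead_mon (matvars n) R f = g"
    by (rule lead_mon_eqI[OF order]) (use f(2) less in auto)
  moreover have "f \<in> I2 n" "f \<noteq> 0" using f unfolding I2_def by (auto intro: ideal_gen.gen)
  ultimately show "x \<in> ideal_gen n {monomial_poly (lead_mon (matvars n) R f) |f. f \<in> (I2 n :: 'a mpoly set) \<and> f \<noteq> 0}"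
    using x by (auto intro: ideal_gen.gen)
qed

end

theorem proposition4p1:
  fixes n :: nat and R :: "var \<Rightarrow> var \<Rightarrow> bool"
  assumes n: "n \<ge> 2"
    and total: "strict_total_on (matvars n) R"
    and diag_chain: "\<And>i. 1 \<le> i \<Longrightarrow> i < n \<Longrightarrow> R (i, i) (i + 1, i + 1)"
    and diag_below: "\<And>i a b. (i, i) \<in> matvars n \<Longrightarrow> (a, b) \<in> matvars n \<Longrightarrow> a \<noteq> b \<Longrightarrow> R (i, i) (a, b)"
    and offdiag: "\<And>i j h k. (i, j) \<in> matvars n \<Longrightarrow> (h, k) \<in> matvars n \<Longrightarrow> i \<noteq> j \<Longrightarrow> h \<noteq> k \<Longrightarrow>
        \<bar>int i - int j\<bar> < \<bar>int h - int k\<bar> \<Longrightarrow> R (h, k) (i, j)"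
  shows "initial_ideal n R (I2 n :: ('a::field) mpoly set) = H2 n"
  using initial_ideal_I2_subset[OF total diag_below offdiag] H2_subset_initial_ideal_I2[OF total diag_below offdiag]
  by (rule subset_antisym)

end
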